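(* Assume (A1)–(A4) and $\eta_x,\eta_z>0$ (see context). Then for all $K\ge1$ there exists $j\in[K]$ such that $$\pi^j\le\sqrt{\frac{2(\Phi^1-\hat\Phi)}{\theta}\left(1+\frac{2(\theta+\tau_z)^2}{K\eta_z\rho}\right)}.$$
   Context: Let $T\ge1$, $[T]=\{1,\dots,T\}$; for $t\in[T]$: $X_t\subseteq\mathbb{R}^{n_t}$, $f_t:\mathbb{R}^{n_t}\to\mathbb{R}$, $A_t\in\mathbb{R}^{m\times n_t}$; $b\in\mathbb{R}^m$; $X=\prod_tX_t$, $A=[A_1\cdots A_T]$, $Ax=\sum_tA_tx_t$, $A_{\neq t}x_{\neq t}=\sum_{s\neq t}A_sx_s$; $\|w\|_M=\sqrt{w^\top Mw}$. Assumptions: (A1) $X_t$ nonempty compact; (A2) $f_t$ is $C^2$; (A3) $A$ full row rank; (A4) $\{x\in X:Ax=b\}\neq\emptyset$. Parameters $\rho,\theta,\tau_x,\tau_z>0$ with $\eta_x:=\frac{\tau_x}{4}-\frac{(T-1)\rho}{2}>0$, $\eta_z:=\frac{\tau_z}{4}-\frac{2(\theta+\tau_z)^2}{\rho}>0$. $\mathcal{L}(x,z,\lambda)=\sum_tf_t(x_t)+\frac{\theta}{2}\|z\|^2+\lambda^\top(Ax+z-b)+\frac{\rho}{2}\|Ax+z-b\|^2$. Jacobi scheme: given $x^0\in X$, $z^0,\lambda^0\in\mathbb{R}^m$, for $k\ge1$: (i) for each $t$, $x_t^k$ is a local minimizer, computed by a solver warm-started at $x_t^{k-1}$ (so that its subproblem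 objective does not exceed that of $x_t^{k-1}$), of $\min_{x_t\in X_t}f_t(x_t)+(\lambda^{k-1})^\top A_tx_t+\frac{\rho}{2}\|A_tx_t+A_{\neq t}x^{k-1}_{\neq t}+z^{k-1}-b\|^2+\frac{\tau_x}{2}\|x_t-x_t^{k-1}\|^2_{A_t^\top A_t}$; (ii) $z^k=(\tau_zz^{k-1}-\rho(Ax^k-b)-\lambda^{k-1})/(\tau_z+\rho+\theta)$; (iii) $\lambda^k=\lambda^{k-1}+\rho(Ax^k+z^k-b)$. $\Phi(x,z,\lambda,\hat x,\hat z)=\mathcal{L}(x,z,\lambda)+\frac{\tau_z}{4}\|z-\hat z\|^2+\sum_t\frac{\tau_x}{4}\|x_t-\hat x_t\|^2_{A_t^\top A_t}$; $\Phi^1=\Phi(x^1,z^1,\lambda^1,x^0,z^0)$; $\hat\Phi=\min_{x\in X}\sum_tf_t(x_t)$; $\pi^k=\|Ax^k-b\|$. *)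

theory Defs
  imports "HOL-Analysis.Analysis"
begin

text \<open>A vector of R^n is represented as a function v :: nat \<Rightarrow> real whose
coordinates are v 0, ..., v (n-1); block vectors of R^(n t) are required to vanish outside
{0..<n t} (the set Rn n below, with the product topology, which is homeomorphic to R^n).
Vectors of R^m (z, lambda, b, A x) are functions nat \<Rightarrow> real of which only the coordinates
i < m matter. The block matrix A_t in R^(m x n t) is given by its entries A t i j
(i < m, j < n t). Blocks are indexed by t in {1..T}.\<close>

definition Rn :: "nat \<Rightarrow> (nat \<Rightarrow> real) set" where
  "Rn n = {v. \<forall>i\<ge>n. v i = 0}"

definition C2_fun :: "nat \<Rightarrow> ((nat \<Rightarrow> real) \<Rightarrow> real) \<Rightarrow> bool" where
  "C2_fun n f \<longleftrightarrow> (\<exists>D1 D2.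
     (\<forall>i<n. \<forall>v\<in>Rn n. ((\<lambda>s. f (v(i := s))) has_real_derivative D1 i v) (at (v i))) \<and>
     (\<forall>i<n. \<forall>j<n. \<forall>v\<in>Rn n. ((\<lambda>s. D1 i (v(j := s))) has_real_derivative D2 i j v) (at (v j))) \<and>
     continuous_on (Rn n) f \<and>
     (\<forall>i<n. continuous_on (Rn n) (D1 i)) \<and>
     (\<forall>i<n. \<forall>j<n. continuous_on (Rn n) (D2 i j)))"

definition nsq :: "nat \<Rightarrow> (nat \<Rightarrow> real) \<Rightarrow> real" where
  "nsq m w = (\<Sum>i<m. (w i)\<^sup>2)"

definition ip :: "nat \<Rightarrow> (nat \<Rightarrow> real) \<Rightarrow> (nat \<Rightarrow> real) \<Rightarrow> real" where
  "ip m u w = (\<Sum>i<m. u i * w i)"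

definition mv :: "nat \<Rightarrow> (nat \<Rightarrow> nat \<Rightarrow> real) \<Rightarrow> (nat \<Rightarrow> real) \<Rightarrow> (nat \<Rightarrow> real)" where
  "mv nt M v = (\<lambda>i. \<Sum>j<nt. M i j * v j)"

definition Ax :: "nat \<Rightarrow> (nat \<Rightarrow> nat) \<Rightarrow> (nat \<Rightarrow> nat \<Rightarrow> nat \<Rightarrow> real) \<Rightarrow> (nat \<Rightarrow> nat \<Rightarrow> real) \<Rightarrow> (nat \<Rightarrow> real)" where
  "Ax T n A x = (\<lambda>i. \<Sum>t\<in>{1..T}. mv (n t) (A t) (x t) i)"

definition Ax_ne :: "nat \<Rightarrow> (nat \<Rightarrow> nat) \<Rightarrow> (nat \<Rightarrow> nat \<Rightarrow> nat \<Rightarrow> real) \<Rightarrow> (nat \<Rightarrow> nat \<Rightarrow> real) \<Rightarrow> nat \<Rightarrow> (nat \<Rightarrow> real)" where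
  "Ax_ne T n A x t = (\<lambda>i. \<Sum>s\<in>{1..T}-{t}. mv (n s) (A s) (x s) i)"

definition full_row_rank :: "nat \<Rightarrow> nat \<Rightarrow> (nat \<Rightarrow> nat) \<Rightarrow> (nat \<Rightarrow> nat \<Rightarrow> nat \<Rightarrow> real) \<Rightarrow> bool" where
  "full_row_rank m T n A \<longleftrightarrow>
     (\<forall>y::nat \<Rightarrow> real. (\<forall>t\<in>{1..T}. \<forall>j<n t. (\<Sum>i<m. y i * A t i j) = 0) \<longrightarrow> (\<forall>i<m. y i = 0))"

definition AL :: "nat \<Rightarrow> nat \<Rightarrow> (nat \<Rightarrow> nat) \<Rightarrow> (nat \<Rightarrow> (nat \<Rightarrow> real) \<Rightarrow> real) \<Rightarrow>
    (nat \<Rightarrow> nat \<Rightarrow> nat \<Rightarrow> real) \<Rightarrow> (nat \<Rightarrow> real) \<Rightarrow> real \<Rightarrow> real \<Rightarrow>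
    (nat \<Rightarrow> nat \<Rightarrow> real) \<Rightarrow> (nat \<Rightarrow> real) \<Rightarrow> (nat \<Rightarrow> real) \<Rightarrow> real" where
  "AL m T n f A b \<rho> \<theta> x z lam =
     (\<Sum>t\<in>{1..T}. f t (x t)) + \<theta> / 2 * nsq m z
     + ip m lam (\<lambda>i. Ax T n A x i + z i - b i)
     + \<rho> / 2 * nsq m (\<lambda>i. Ax T n A x i + z i - b i)"

definition Phi :: "nat \<Rightarrow> nat \<Rightarrow> (nat \<Rightarrow> nat) \<Rightarrow> (nat \<Rightarrow> (nat \<Rightarrow> real) \<Rightarrow> real) \<Rightarrow>
    (nat \<Rightarrow> nat \<Rightarrow> nat \<Rightarrow> real) \<Rightarrow> (nat \<Rightarrow> real) \<Rightarrow> real \<Rightarrow> real \<Rightarrow> real \<Rightarrow> real \<Rightarrow>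
    (nat \<Rightarrow> nat \<Rightarrow> real) \<Rightarrow> (nat \<Rightarrow> real) \<Rightarrow> (nat \<Rightarrow> real) \<Rightarrow>
    (nat \<Rightarrow> nat \<Rightarrow> real) \<Rightarrow> (nat \<Rightarrow> real) \<Rightarrow> real" where
  "Phi m T n f A b \<rho> \<theta> \<tau>x \<tau>z x z lam xh zh =
     AL m T n f A b \<rho> \<theta> x z lam + \<tau>z / 4 * nsq m (\<lambda>i. z i - zh i)
     + (\<Sum>t\<in>{1..T}. \<tau>x / 4 * nsq m (mv (n t) (A t) (\<lambda>j. x t j - xh t j)))"

definition subobj :: "nat \<Rightarrow> nat \<Rightarrow> (nat \<Rightarrow> nat) \<Rightarrow> (nat \<Rightarrow> (nat \<Rightarrow> real) \<Rightarrow> real) \<Rightarrow>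
    (nat \<Rightarrow> nat \<Rightarrow> nat \<Rightarrow> real) \<Rightarrow> (nat \<Rightarrow> real) \<Rightarrow> real \<Rightarrow> real \<Rightarrow>
    (nat \<Rightarrow> nat \<Rightarrow> real) \<Rightarrow> (nat \<Rightarrow> real) \<Rightarrow> (nat \<Rightarrow> real) \<Rightarrow> nat \<Rightarrow> (nat \<Rightarrow> real) \<Rightarrow> real" where
  "subobj m T n f A b \<rho> \<tau>x xp zp lp t y =
     f t y + ip m lp (mv (n t) (A t) y)
     + \<rho> / 2 * nsq m (\<lambda>i. mv (n t) (A t) y i + Ax_ne T n A xp t i + zp i - b i)
     + \<tau>x / 2 * nsq m (mv (n t) (A t) (\<lambda>j. y j - xp t j))"

text \<open>Local minimizer of g over S (neighbourhoods in the product topology, which on Rn n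
is the Euclidean topology).\<close>
definition local_min_on :: "((nat \<Rightarrow> real) \<Rightarrow> real) \<Rightarrow> (nat \<Rightarrow> real) set \<Rightarrow> (nat \<Rightarrow> real) \<Rightarrow> bool" where
  "local_min_on g S y \<longleftrightarrow> y \<in> S \<and> (\<exists>U. open U \<and> y \<in> U \<and> (\<forall>w\<in>S \<inter> U. g y \<le> g w))"

end

theory Submission
  imports Defs
begin

text \<open>The z- and \<lambda>-updates of the first iteration force
\<lambda>1 = -\<theta> z1 - \<tau>z (z1 - z0). Substituting this into \<Phi>1 and completing the square,
which needs only \<rho> \<ge> \<theta> + 2 \<tau>z (a consequence of \<eta>z > 0), gives
\<Phi>1 \<ge> \<Sum>t f_t(x1_t) + \<theta>/2 (\<pi>1)^2 \<ge> \<Phi>hat + \<theta>/2 (\<pi>1)^2. So j = 1 works for every K,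
the bracketed factor being at least 1.\<close>

lemma penalty_ge_of_eta_z_pos:
  fixes \<rho> \<theta> \<tau> :: real
  assumes "\<rho> > 0" "\<theta> > 0" "\<tau> > 0" and "\<tau> / 4 - 2 * (\<theta> + \<tau>)\<^sup>2 / \<rho> > 0"
  shows "\<theta> + 2 * \<tau> \<le> \<rho>"
proof -
  have "8 * (\<theta> + \<tau>)\<^sup>2 < \<tau> * \<rho>"
    using assms(1,4) by (simp add: field_simps)
  moreover have "\<tau> * (\<theta> + 2 * \<tau>) \<le> 8 * (\<theta> + \<tau>)\<^sup>2"
    using assms(2,3) by (simp add: power2_eq_square algebra_simps)
  ultimately have "\<tau> * (\<theta> + 2 * \<tau>) \<le> \<tau> * \<rho>" by linarith
  then show ?thesis using assms(3) by simp
qed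

lemma multiplier_eq_of_updates:
  fixes \<rho> \<theta> \<tau> z z' l l' a :: real
  assumes "\<tau> + \<rho> + \<theta> \<noteq> 0"
    and "z' = (\<tau> * z - \<rho> * a - l) / (\<tau> + \<rho> + \<theta>)"
    and "l' = l + \<rho> * (a + z')"
  shows "l' = - \<theta> * z' - \<tau> * (z' - z)"
proof -
  have "z' * (\<tau> + \<rho> + \<theta>) = \<tau> * z - \<rho> * a - l"
    using assms(1,2) by simp
  then show ?thesis using assms(3) by (simp add: algebra_simps)
qed

lemma sq_residual_le_quadratic_terms:
  fixes \<rho> \<theta> \<tau> r z d :: real
  assumes "\<theta> + 2 * \<tau> \<le> \<rho>" "0 \<le> \<tau>"
  shows "\<theta> / 2 * (r - z)\<^sup>2 \<le> \<theta> / 2 * z\<^sup>2 + (- \<theta> * z - \<tau> * d) * r + \<rho> / 2 * r\<^sup>2 + \<tau> / 4 * d\<^sup>2"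
proof -
  have "\<theta> / 2 * z\<^sup>2 + (- \<theta> * z - \<tau> * d) * r + \<rho> / 2 * r\<^sup>2 + \<tau> / 4 * d\<^sup>2 - \<theta> / 2 * (r - z)\<^sup>2
      = \<tau> / 4 * (d - 2 * r)\<^sup>2 + ((\<rho> - \<theta>) / 2 - \<tau>) * r\<^sup>2"
    by (simp add: power2_eq_square field_simps)
  moreover have "0 \<le> \<tau> / 4 * (d - 2 * r)\<^sup>2" "0 \<le> ((\<rho> - \<theta>) / 2 - \<tau>) * r\<^sup>2"
    using assms by simp_all
  ultimately show ?thesis by linarith
qed

lemma nsq_residual_le_quadratic_terms:
  fixes \<rho> \<theta> \<tau> :: real and r z z0 lam :: "nat \<Rightarrow> real"
  assumes "\<theta> + 2 * \<tau> \<le> \<rho>" "0 \<le> \<tau>"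
    and lam: "\<And>i. i < m \<Longrightarrow> lam i = - \<theta> * z i - \<tau> * (z i - z0 i)"
  shows "\<theta> / 2 * nsq m (\<lambda>i. r i - z i)
    \<le> \<theta> / 2 * nsq m z + ip m lam r + \<rho> / 2 * nsq m r + \<tau> / 4 * nsq m (\<lambda>i. z i - z0 i)"
proof -
  have "(\<Sum>i<m. \<theta> / 2 * (r i - z i)\<^sup>2)
      \<le> (\<Sum>i<m. \<theta> / 2 * (z i)\<^sup>2 + lam i * r i + \<rho> / 2 * (r i)\<^sup>2 + \<tau> / 4 * (z i - z0 i)\<^sup>2)"
    using sq_residual_le_quadratic_terms[OF assms(1,2)] lam by (intro sum_mono) simp
  then show ?thesis
    unfolding nsq_def ip_def by (simp add: sum.distrib sum_distrib_left)
qed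

lemma nsq_nonneg: "0 \<le> nsq m w"
  unfolding nsq_def by (simp add: sum_nonneg)

lemma Phi_ge_objective_plus_residual:
  assumes "\<theta> + 2 * \<tau>z \<le> \<rho>" "0 \<le> \<tau>z" "0 \<le> \<tau>x"
    and "\<And>i. i < m \<Longrightarrow> lam i = - \<theta> * z i - \<tau>z * (z i - zh i)"
  shows "(\<Sum>t\<in>{1..T}. f t (x t)) + \<theta> / 2 * nsq m (\<lambda>i. Ax T n A x i - b i)
    \<le> Phi m T n f A b \<rho> \<theta> \<tau>x \<tau>z x z lam xh zh"
proof -
  let ?r = "\<lambda>i. Ax T n A x i + z i - b i"
  have "\<theta> / 2 * nsq m (\<lambda>i. ?r i - z i)
      \<le> \<theta> / 2 * nsq m z + ip m lam ?r + \<rho> / 2 * nsq m ?r + \<tau>z / 4 * nsq m (\<lambda>i. z i - zh i)"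
    by (rule nsq_residual_le_quadratic_terms) (use assms in auto)
  moreover have "0 \<le> (\<Sum>t\<in>{1..T}. \<tau>x / 4 * nsq m (mv (n t) (A t) (\<lambda>j. x t j - xh t j)))"
    using assms(3) by (simp add: sum_nonneg nsq_nonneg)
  ultimately show ?thesis
    unfolding Phi_def AL_def by simp
qed

lemma Inf_sum_le_feasible:
  fixes f :: "'i \<Rightarrow> 'a::topological_space \<Rightarrow> real"
  assumes "\<And>t. t \<in> I \<Longrightarrow> compact (X t)" "\<And>t. t \<in> I \<Longrightarrow> continuous_on (X t) (f t)"
    and "\<forall>t\<in>I. x t \<in> X t"
  shows "Inf {\<Sum>t\<in>I. f t (y t) | y. \<forall>t\<in>I. y t \<in> X t} \<le> (\<Sum>t\<in>I. f t (x t))"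
proof (rule cInf_lower)
  have "bdd_below (f t ` X t)" if "t \<in> I" for t
    using assms(1,2) that
    by (intro bounded_imp_bdd_below compact_imp_bounded compact_continuous_image)
  then obtain c where c: "\<And>t v. t \<in> I \<Longrightarrow> v \<in> X t \<Longrightarrow> c t \<le> f t v"
    unfolding bdd_below_def by (metis imageI)
  show "bdd_below {\<Sum>t\<in>I. f t (y t) | y. \<forall>t\<in>I. y t \<in> X t}"
    by (rule bdd_belowI[where m = "\<Sum>t\<in>I. c t"]) (auto intro!: sum_mono c)
qed (use assms(3) in blast)

theorem proposition1:
  fixes T m :: nat and n :: "nat \<Rightarrow> nat"
    and X :: "nat \<Rightarrow> (nat \<Rightarrow> real) set"
    and f :: "nat \<Rightarrow> (nat \<Rightarrow> real) \<Rightarrow> real"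
    and A :: "nat \<Rightarrow> nat \<Rightarrow> nat \<Rightarrow> real"
    and b :: "nat \<Rightarrow> real"
    and \<rho> \<theta> \<tau>x \<tau>z :: real
    and x :: "nat \<Rightarrow> nat \<Rightarrow> nat \<Rightarrow> real"
    and z lam :: "nat \<Rightarrow> nat \<Rightarrow> real"
  assumes T: "T \<ge> 1"
    and A1: "\<forall>t\<in>{1..T}. X t \<noteq> {} \<and> compact (X t) \<and> X t \<subseteq> Rn (n t)"
    and A2: "\<forall>t\<in>{1..T}. C2_fun (n t) (f t)"
    and A3: "full_row_rank m T n A"
    and A4: "\<exists>y. (\<forall>t\<in>{1..T}. y t \<in> X t) \<and> (\<forall>i<m. Ax T n A y i = b i)"
    and params: "\<rho> > 0" "\<theta> > 0" "\<tau>x > 0" "\<tau>z > 0"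
    and eta_x: "\<tau>x / 4 - (real T - 1) * \<rho> / 2 > 0"
    and eta_z: "\<tau>z / 4 - 2 * (\<theta> + \<tau>z)\<^sup>2 / \<rho> > 0"
    and init: "\<forall>t\<in>{1..T}. x 0 t \<in> X t"
    and step_x: "\<forall>k\<ge>1. \<forall>t\<in>{1..T}.
        local_min_on (subobj m T n f A b \<rho> \<tau>x (x (k-1)) (z (k-1)) (lam (k-1)) t) (X t) (x k t)
        \<and> subobj m T n f A b \<rho> \<tau>x (x (k-1)) (z (k-1)) (lam (k-1)) t (x k t)
          \<le> subobj m T n f A b \<rho> \<tau>x (x (k-1)) (z (k-1)) (lam (k-1)) t (x (k-1) t)"
    and step_z: "\<forall>k\<ge>1. \<forall>i<m. z k i =
        (\<tau>z * z (k-1) i - \<rho> * (Ax T n A (x k) i - b i) - lam (k-1) i) / (\<tau>z + \<rho> + \<theta>)"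
    and step_lam: "\<forall>k\<ge>1. \<forall>i<m. lam k i = lam (k-1) i + \<rho> * (Ax T n A (x k) i + z k i - b i)"
  shows "\<forall>K::nat\<ge>1. \<exists>j\<in>{1..K}.
     sqrt (nsq m (\<lambda>i. Ax T n A (x j) i - b i))
     \<le> sqrt (2 * (Phi m T n f A b \<rho> \<theta> \<tau>x \<tau>z (x 1) (z 1) (lam 1) (x 0) (z 0)
                 - Inf {\<Sum>t\<in>{1..T}. f t (y t) | y. \<forall>t\<in>{1..T}. y t \<in> X t}) / \<theta>
             * (1 + 2 * (\<theta> + \<tau>z)\<^sup>2 / (real K * (\<tau>z / 4 - 2 * (\<theta> + \<tau>z)\<^sup>2 / \<rho>) * \<rho>)))"
proof (intro allI impI bexI)
  fix K :: nat assume K: "K \<ge> 1"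
  let ?\<pi>sq = "nsq m (\<lambda>i. Ax T n A (x 1) i - b i)"
  let ?gap = "Phi m T n f A b \<rho> \<theta> \<tau>x \<tau>z (x 1) (z 1) (lam 1) (x 0) (z 0)
                 - Inf {\<Sum>t\<in>{1..T}. f t (y t) | y. \<forall>t\<in>{1..T}. y t \<in> X t}"
  let ?c = "2 * (\<theta> + \<tau>z)\<^sup>2 / (real K * (\<tau>z / 4 - 2 * (\<theta> + \<tau>z)\<^sup>2 / \<rho>) * \<rho>)"
  have lam1: "lam 1 i = - \<theta> * z 1 i - \<tau>z * (z 1 i - z 0 i)" if "i < m" for i
    using that step_z step_lam params
    by (intro multiplier_eq_of_updates[where a = "Ax T n A (x 1) i - b i"]) auto
  have cont: "continuous_on (X t) (f t)" if "t \<in> {1..T}" for t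
    using A1 A2 that unfolding C2_fun_def by (meson continuous_on_subset)
  have "\<forall>t\<in>{1..T}. x 1 t \<in> X t"
    using step_x unfolding local_min_on_def by auto
  then have "Inf {\<Sum>t\<in>{1..T}. f t (y t) | y. \<forall>t\<in>{1..T}. y t \<in> X t} \<le> (\<Sum>t\<in>{1..T}. f t (x 1 t))"
    using A1 cont by (intro Inf_sum_le_feasible) auto
  moreover have "(\<Sum>t\<in>{1..T}. f t (x 1 t)) + \<theta> / 2 * ?\<pi>sq
      \<le> Phi m T n f A b \<rho> \<theta> \<tau>x \<tau>z (x 1) (z 1) (lam 1) (x 0) (z 0)"
    using penalty_ge_of_eta_z_pos[OF params(1,2,4) eta_z] params lam1
    by (intro Phi_ge_objective_plus_residual) auto
  ultimately have "?\<pi>sq \<le> 2 * ?gap / \<theta>"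
    using params(2) by (simp add: field_simps)
  moreover have "0 \<le> ?c"
    using eta_z params K by (intro divide_nonneg_pos) auto
  ultimately have "?\<pi>sq \<le> 2 * ?gap / \<theta> * (1 + ?c)"
    using nsq_nonneg[of m] by (smt (verit) mult_le_cancel_left1)
  then show "sqrt ?\<pi>sq \<le> sqrt (2 * ?gap / \<theta> * (1 + ?c))"
    by simp
qed (simp)

end
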